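(* Let $(R,\mathfrak{m})$ be a commutative Artinian local ring with identity, $\mathfrak{m}\neq0$ and $\mathfrak{m}^2=0$, and let $n\ge7$ be an integer. If $|R|>4$ (including $R$ infinite), then $L(x^n)=\{3,4,5,\dots,n-2\}\cup\{n\}$ if $n$ is odd, and $L(x^n)=\{2,3,4,\dots,n-2\}\cup\{n\}$ if $n$ is even. If $|R|=4$, then $L(x^n)=\{3,4,5,\dots,n-4\}\cup\{n-2,n\}$ if $n$ is odd, and $L(x^n)=\{2,3,4,\dots,n-4\}\cup\{n-2,n\}$ if $n$ is even.
   Context: A nonunit polynomial in $R[x]$ is irreducible if in any factorization into two polynomials one factor is a unit of $R[x]$ (a polynomial $a_0+\dots+a_dx^d$ is a unit iff $a_0$ is a unit of $R$ and $a_i\in\mathfrak{m}$ for $i>0$). A positive integer $k$ is a length of $f\in R[x]$ if $f$ is a product of $k$ irreducible polynomials of $R[x]$; $L(f)$ denotes the set of lengths of $f$. *)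

theory Defs
  imports "HOL-Computational_Algebra.Polynomial" "HOL-Computational_Algebra.Factorial_Ring"
begin

definition is_ideal :: "'a::comm_ring_1 set \<Rightarrow> bool" where
  "is_ideal I \<longleftrightarrow> 0 \<in> I \<and> (\<forall>a\<in>I. \<forall>b\<in>I. a + b \<in> I) \<and> (\<forall>r. \<forall>a\<in>I. r * a \<in> I)"

definition artinian_ring :: "'a::comm_ring_1 itself \<Rightarrow> bool" where
  "artinian_ring _ \<longleftrightarrow>
     \<not> (\<exists>I :: nat \<Rightarrow> 'a set. (\<forall>k. is_ideal (I k)) \<and> (\<forall>k. I (Suc k) \<subset> I k))"

definition maximal_ideal :: "'a::comm_ring_1 set \<Rightarrow> bool" where
  "maximal_ideal M \<longleftrightarrow> is_ideal M \<and> M \<noteq> UNIV \<and>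
     (\<forall>J. is_ideal J \<and> M \<subseteq> J \<longrightarrow> J = M \<or> J = UNIV)"

definition local_ring_with_max :: "'a::comm_ring_1 set \<Rightarrow> bool" where
  "local_ring_with_max M \<longleftrightarrow> maximal_ideal M \<and> (\<forall>J. maximal_ideal J \<longrightarrow> J = M)"

definition lengths :: "'a::comm_ring_1 poly \<Rightarrow> nat set" where
  "lengths f = {k. k > 0 \<and> (\<exists>fs. length fs = k \<and> (\<forall>g\<in>set fs. irreducible g) \<and> prod_list fs = f)}"

end

theory Submission
  imports Defs
begin

text \<open>Reduce modulo \<open>\<m>\<close>. A polynomial whose residue is a monomial \<open>u x\<^sup>d\<close> (\<open>u\<close> a unit) has
  factors of the same kind, with degrees adding up to \<open>d\<close>; since \<open>\<m>\<^sup>2 = 0\<close>, such a polynomial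
  of residue degree \<open>d \<ge> 2\<close> is irreducible as soon as its constant term is nonzero, and it must
  have a nonzero constant term if it is irreducible. In a factorization of \<open>x\<^sup>n\<close> into \<open>k\<close> irreducibles
  with residue degrees \<open>d\<^sub>i\<close>, let \<open>D = max d\<^sub>i \<ge> 2\<close>. The coefficient of \<open>x\<^sup>n\<^sup>-\<^sup>D\<close>, which is \<open>0\<close>,
  is the sum over the factors of degree \<open>D\<close> of their (nonzero) constant terms times units; hence
  \<open>D\<close> occurs at least twice, which gives \<open>k \<le> n - 2\<close> and excludes \<open>k = 2\<close> for odd \<open>n\<close>. If \<open>|R| = 4\<close>
  then \<open>\<m> = {0, a}\<close> with \<open>2a = 0\<close>, so \<open>D\<close> occurs an even number of times, which also excludes
  \<open>k = n - 3\<close>. Conversely, the lengths are realised by products such as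
  \<open>(x\<^sup>D + a)(x\<^sup>D - a) x\<^sup>n\<^sup>-\<^sup>2\<^sup>D\<close>, \<open>(x\<^sup>D + a - a x\<^sup>D\<^sup>-\<^sup>2)(x\<^sup>D - a)(x\<^sup>2 + a) x\<^sup>n\<^sup>-\<^sup>2\<^sup>D\<^sup>-\<^sup>2\<close> and, when there are
  \<open>a, b \<in> \<m>\<close> with \<open>a, b, a + b \<noteq> 0\<close> (which happens iff \<open>|R| > 4\<close>), \<open>(x\<^sup>2 + a)(x\<^sup>2 + b)(x\<^sup>2 - a - b) x\<^sup>n\<^sup>-\<^sup>6\<close>.\<close>

section \<open>Local rings with square-zero maximal ideal\<close>

lemma mult_inverse_add_sq_zero:
  fixes c c' p :: "'a::comm_ring_1"
  assumes "c * c' = 1" "p * p = 0"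
  shows "(c + p) * (c' - c' * c' * p) = 1"
proof -
  have "(c + p) * (c' - c' * c' * p) = c * c' - (c * c') * c' * p + p * c' - c' * c' * (p * p)"
    by (simp add: algebra_simps)
  then show ?thesis using assms by (simp add: algebra_simps)
qed

locale sq_zero_local =
  fixes M :: "'a::comm_ring_1 set"
  assumes ideal: "is_ideal M" and one_not_mem: "1 \<notin> M"
    and not_mem_unit: "x \<notin> M \<Longrightarrow> x dvd 1"
    and mult_mem_eq_0: "a \<in> M \<Longrightarrow> b \<in> M \<Longrightarrow> a * b = 0"
begin

lemma zero_mem [simp]: "0 \<in> M"
  using ideal by (simp add: is_ideal_def)

lemma add_mem: "a \<in> M \<Longrightarrow> b \<in> M \<Longrightarrow> a + b \<in> M"
  using ideal by (simp add: is_ideal_def)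

lemma mult_mem_right: "a \<in> M \<Longrightarrow> r * a \<in> M"
  using ideal by (simp add: is_ideal_def)

lemma mult_mem_left: "a \<in> M \<Longrightarrow> a * r \<in> M"
  using mult_mem_right[of a r] by (simp add: mult.commute)

lemma uminus_mem: "a \<in> M \<Longrightarrow> - a \<in> M"
  using mult_mem_right[of a "-1"] by simp

lemma diff_mem: "a \<in> M \<Longrightarrow> b \<in> M \<Longrightarrow> a - b \<in> M"
  using add_mem[of a "-b"] uminus_mem[of b] by simp

lemma sum_mem: "(\<And>i. i \<in> A \<Longrightarrow> f i \<in> M) \<Longrightarrow> sum f A \<in> M"
  by (induct A rule: infinite_finite_induct) (auto intro: add_mem)

lemma unit_not_mem: "x dvd 1 \<Longrightarrow> x \<notin> M"
  using mult_mem_left one_not_mem by (metis dvd_def)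

lemma mult_not_mem:
  assumes "x \<notin> M" "y \<notin> M"
  shows "x * y \<notin> M"
proof -
  have "x dvd 1" "y dvd 1" using not_mem_unit assms by simp_all
  then have "x * y dvd 1" using mult_dvd_mono[of x 1 y 1] by simp
  then show ?thesis by (rule unit_not_mem)
qed

lemma add_not_mem: "x \<notin> M \<Longrightarrow> y \<in> M \<Longrightarrow> x + y \<notin> M"
  using diff_mem[of "x + y" y] by auto

lemma not_mem_mult_ne_0:
  assumes "u \<notin> M" "w \<noteq> 0"
  shows "u * w \<noteq> 0"
proof
  assume "u * w = 0"
  from not_mem_unit[OF assms(1)] obtain v where "1 = u * v" by (rule dvdE)
  then have "w = v * (u * w)" by (metis mult.assoc mult.commute mult_1_left)
  with \<open>u * w = 0\<close> assms(2) show False by simp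
qed

end

lemma is_ideal_add_multiples:
  fixes x :: "'a::comm_ring_1"
  assumes "is_ideal I"
  shows "is_ideal {m + r * x |m r. m \<in> I}"
  unfolding is_ideal_def
proof (intro conjI ballI allI)
  have "0 \<in> I" using assms by (simp add: is_ideal_def)
  moreover have "(0::'a) = 0 + 0 * x" by simp
  ultimately show "0 \<in> {m + r * x |m r. m \<in> I}" by blast
next
  fix a b assume "a \<in> {m + r * x |m r. m \<in> I}" "b \<in> {m + r * x |m r. m \<in> I}"
  then obtain m1 r1 m2 r2 where "a = m1 + r1 * x" "b = m2 + r2 * x" "m1 \<in> I" "m2 \<in> I" by blast
  moreover have "m1 + m2 \<in> I" using assms \<open>m1 \<in> I\<close> \<open>m2 \<in> I\<close> by (simp add: is_ideal_def)
  moreover have "a + b = (m1 + m2) + (r1 + r2) * x" using calculation by (simp add: algebra_simps)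
  ultimately show "a + b \<in> {m + r * x |m r. m \<in> I}" by blast
next
  fix s a assume "a \<in> {m + r * x |m r. m \<in> I}"
  then obtain m1 r1 where "a = m1 + r1 * x" "m1 \<in> I" by blast
  moreover have "s * m1 \<in> I" using assms \<open>m1 \<in> I\<close> by (simp add: is_ideal_def)
  moreover have "s * a = s * m1 + (s * r1) * x" using calculation by (simp add: algebra_simps)
  ultimately show "s * a \<in> {m + r * x |m r. m \<in> I}" by blast
qed

lemma sq_zero_local_of_local_ring:
  fixes M :: "'a::comm_ring_1 set"
  assumes "local_ring_with_max M" and sq: "\<forall>a\<in>M. \<forall>b\<in>M. a * b = 0"
  shows "sq_zero_local M"
proof
  have "maximal_ideal M" using assms(1) by (simp add: local_ring_with_max_def)
  then have ideal: "is_ideal M" and proper: "M \<noteq> UNIV"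
    and max: "\<And>J. is_ideal J \<Longrightarrow> M \<subseteq> J \<Longrightarrow> J = M \<or> J = UNIV"
    by (auto simp: maximal_ideal_def)
  then show "is_ideal M" by simp
  show "1 \<notin> M"
  proof
    assume "1 \<in> M"
    then have "r * 1 \<in> M" for r using ideal unfolding is_ideal_def by blast
    with proper show False by auto
  qed
  show "x dvd 1" if "x \<notin> M" for x
  proof -
    let ?J = "{m + r * x |m r. m \<in> M}"
    have sub: "M \<subseteq> ?J"
    proof
      fix m assume "m \<in> M"
      moreover have "m = m + 0 * x" by simp
      ultimately show "m \<in> ?J" by blast
    qed
    have "x \<in> ?J"
    proof -
      have "x = 0 + 1 * x" by simp
      then show ?thesis using ideal unfolding is_ideal_def by blast
    qed
    have "?J = M \<or> ?J = UNIV" using max[OF is_ideal_add_multiples[OF ideal] sub] .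
    moreover have "?J \<noteq> M" using \<open>x \<in> ?J\<close> that by blast
    ultimately have "?J = UNIV" by blast
    then have "1 \<in> ?J" by simp
    then obtain m r where mr: "1 = m + r * x" "m \<in> M" by blast
    have rx: "r * x = 1 - m" using mr(1) by (metis add_diff_cancel_left')
    have "x * (r * (1 + m)) = (r * x) * (1 + m)" by (simp add: ac_simps)
    also have "\<dots> = 1 - m * m" unfolding rx by (simp add: algebra_simps)
    also have "m * m = 0" using sq mr(2) by blast
    finally have "x * (r * (1 + m)) = 1" by simp
    then show ?thesis by (metis dvdI)
  qed
qed (use sq in auto)

section \<open>Polynomials whose residue is a monomial\<close>

context sq_zero_local
begin

definition monomial_mod :: "'a poly \<Rightarrow> nat \<Rightarrow> bool" where
  "monomial_mod f d \<longleftrightarrow> coeff f d \<notin> M \<and> (\<forall>j. j \<noteq> d \<longrightarrow> coeff f j \<in> M)"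

lemma monomial_mod_unique: "monomial_mod f a \<Longrightarrow> monomial_mod f b \<Longrightarrow> a = b"
  unfolding monomial_mod_def by blast

lemma monomial_mod_1: "monomial_mod 1 0"
  by (simp add: monomial_mod_def one_not_mem)

lemma X_power_eq_monom: "[:0,1:] ^ n = monom 1 n"
  by (simp add: monom_altdef)

lemma monomial_mod_X_power: "monomial_mod ([:0,1:] ^ n) n"
  by (simp add: X_power_eq_monom monomial_mod_def coeff_monom one_not_mem)

lemma coeff_mult_not_mem:
  assumes "coeff g a \<notin> M" "coeff h b \<notin> M"
    and "\<And>i. i \<le> a + b \<Longrightarrow> i \<noteq> a \<Longrightarrow> coeff g i * coeff h (a + b - i) \<in> M"
  shows "coeff (g * h) (a + b) \<notin> M"
proof -
  have "coeff (g * h) (a + b) =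
      coeff g a * coeff h b + (\<Sum>i\<in>{..a+b}-{a}. coeff g i * coeff h (a + b - i))"
    unfolding coeff_mult by (subst sum.remove[of _ a]) auto
  moreover have "(\<Sum>i\<in>{..a+b}-{a}. coeff g i * coeff h (a + b - i)) \<in> M"
    by (rule sum_mem) (use assms(3) in auto)
  ultimately show ?thesis using mult_not_mem[OF assms(1,2)] add_not_mem by simp
qed

lemma coeff_mult_mem: "(\<And>j. coeff p j \<in> M) \<Longrightarrow> coeff (p * q) n \<in> M"
  unfolding coeff_mult by (rule sum_mem) (simp add: mult_mem_left)

lemma monomial_mod_mult:
  assumes "monomial_mod g a" "monomial_mod h b"
  shows "monomial_mod (g * h) (a + b)"
proof -
  have "coeff (g * h) (a + b) \<notin> M"
    by (rule coeff_mult_not_mem) (use assms in \<open>auto simp: monomial_mod_def intro: mult_mem_left\<close>)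
  moreover have "coeff (g * h) j \<in> M" if "j \<noteq> a + b" for j
    unfolding coeff_mult
  proof (rule sum_mem)
    fix i assume "i \<in> {..j}"
    then show "coeff g i * coeff h (j - i) \<in> M"
      using assms that by (cases "i = a")
        (auto simp: monomial_mod_def intro: mult_mem_right mult_mem_left)
  qed
  ultimately show ?thesis by (simp add: monomial_mod_def)
qed

lemma coeff_not_mem_bounds:
  assumes "\<exists>i. coeff g i \<notin> M"
  shows "\<exists>lo hi. coeff g lo \<notin> M \<and> coeff g hi \<notin> M \<and> (\<forall>j. coeff g j \<notin> M \<longrightarrow> lo \<le> j \<and> j \<le> hi)"
proof -
  let ?S = "{i. coeff g i \<notin> M}"
  have fin: "finite ?S" by (rule finite_subset[of _ "{..degree g}"]) (force intro: le_degree)+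
  have ne: "?S \<noteq> {}" using assms by auto
  show ?thesis
    by (rule exI[of _ "Min ?S"], rule exI[of _ "Max ?S"])
      (use Min_in[OF fin ne] Max_in[OF fin ne] fin in auto)
qed

text \<open>The lowest and the highest unit coefficients of \<open>g\<close> and \<open>h\<close> multiply to unit coefficients
  of \<open>g h\<close>; if \<open>g h\<close> has only one, they all sit in the same degree.\<close>

lemma monomial_mod_mult_factors:
  assumes "monomial_mod (g * h) d"
  obtains a b where "monomial_mod g a" "monomial_mod h b" "a + b = d"
proof -
  have "\<exists>i. coeff g i \<notin> M"
    using assms coeff_mult_mem[of g h d] by (auto simp: monomial_mod_def)
  then obtain a1 a2 where A: "coeff g a1 \<notin> M" "coeff g a2 \<notin> M"
    "\<And>j. coeff g j \<notin> M \<Longrightarrow> a1 \<le> j \<and> j \<le> a2" using coeff_not_mem_bounds by blast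
  have "\<exists>i. coeff h i \<notin> M"
    using assms coeff_mult_mem[of h g d] by (auto simp: monomial_mod_def mult.commute)
  then obtain b1 b2 where B: "coeff h b1 \<notin> M" "coeff h b2 \<notin> M"
    "\<And>j. coeff h j \<notin> M \<Longrightarrow> b1 \<le> j \<and> j \<le> b2" using coeff_not_mem_bounds by blast
  have "coeff (g * h) (a1 + b1) \<notin> M"
  proof (rule coeff_mult_not_mem[OF A(1) B(1)])
    fix i assume "i \<le> a1 + b1" "i \<noteq> a1"
    show "coeff g i * coeff h (a1 + b1 - i) \<in> M"
    proof (cases "i < a1")
      case True
      then have "coeff g i \<in> M" using A(3) by force
      then show ?thesis by (rule mult_mem_left)
    next
      case False
      then have "a1 + b1 - i < b1" using \<open>i \<noteq> a1\<close> \<open>i \<le> a1 + b1\<close> by auto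
      then have "coeff h (a1 + b1 - i) \<in> M" using B(3) by force
      then show ?thesis by (rule mult_mem_right)
    qed
  qed
  then have lo: "a1 + b1 = d" using assms by (auto simp: monomial_mod_def)
  have "coeff (g * h) (a2 + b2) \<notin> M"
  proof (rule coeff_mult_not_mem[OF A(2) B(2)])
    fix i assume "i \<le> a2 + b2" "i \<noteq> a2"
    show "coeff g i * coeff h (a2 + b2 - i) \<in> M"
    proof (cases "i > a2")
      case True
      then have "coeff g i \<in> M" using A(3) by force
      then show ?thesis by (rule mult_mem_left)
    next
      case False
      then have "a2 + b2 - i > b2" using \<open>i \<noteq> a2\<close> \<open>i \<le> a2 + b2\<close> by auto
      then have "coeff h (a2 + b2 - i) \<in> M" using B(3) by force
      then show ?thesis by (rule mult_mem_right)
    qed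
  qed
  then have hi: "a2 + b2 = d" using assms by (auto simp: monomial_mod_def)
  have "a1 \<le> a2" "b1 \<le> b2" using A B by auto
  with lo hi have "a1 = a2" "b1 = b2" by auto
  then have "monomial_mod g a1" "monomial_mod h b1"
    using A B by (auto simp: monomial_mod_def) (metis le_antisym)+
  then show ?thesis using lo by (rule that)
qed

lemma monomial_mod_0_unit:
  assumes "monomial_mod f 0"
  shows "f dvd 1"
proof -
  define c where "c = coeff f 0"
  from not_mem_unit[of c] assms obtain c' where c': "c * c' = 1"
    by (auto simp: monomial_mod_def c_def elim!: dvdE)
  define p where "p = f - [:c:]"
  have "coeff p j \<in> M" for j
    using assms by (cases j) (auto simp: p_def monomial_mod_def c_def intro: diff_mem)
  then have pp: "p * p = 0" by (intro poly_eqI) (simp add: coeff_mult mult_mem_eq_0)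
  have "[:c:] * [:c':] = 1" using c' by (simp add: one_pCons ac_simps)
  from mult_inverse_add_sq_zero[OF this pp] have "f * ([:c':] - [:c':] * [:c':] * p) = 1"
    by (simp add: p_def)
  then show ?thesis by (metis dvdI)
qed

lemma unit_iff_monomial_mod_0:
  assumes "monomial_mod f d"
  shows "f dvd 1 \<longleftrightarrow> d = 0"
proof
  assume "f dvd 1"
  then obtain g where "1 = f * g" by (rule dvdE)
  then have "monomial_mod (f * g) 0" using monomial_mod_1 by simp
  then show "d = 0" using assms by (auto elim: monomial_mod_mult_factors dest: monomial_mod_unique)
qed (use assms monomial_mod_0_unit in simp)

lemma monomial_mod_prod_list:
  "list_all2 monomial_mod fs ds \<Longrightarrow> monomial_mod (prod_list fs) (sum_list ds)"
proof (induct fs arbitrary: ds)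
  case (Cons f fs)
  then show ?case by (auto simp: list_all2_Cons1 intro!: monomial_mod_mult)
qed (simp add: monomial_mod_1)

lemma monomial_mod_prod_list_factors:
  "monomial_mod (prod_list fs) d \<Longrightarrow> \<exists>ds. list_all2 monomial_mod fs ds \<and> sum_list ds = d"
proof (induct fs arbitrary: d)
  case Nil
  then show ?case using monomial_mod_unique monomial_mod_1 by auto
next
  case (Cons f fs)
  then have "monomial_mod (f * prod_list fs) d" by simp
  then obtain a b where "monomial_mod f a" "monomial_mod (prod_list fs) b" "a + b = d"
    by (rule monomial_mod_mult_factors) blast
  with Cons(1) obtain ds where "list_all2 monomial_mod fs ds" "sum_list ds = b" by blast
  with \<open>monomial_mod f a\<close> \<open>a + b = d\<close> show ?case by (intro exI[of _ "a # ds"]) simp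
qed

section \<open>Irreducibility\<close>

lemma irreducible_monomial_modI:
  assumes f: "monomial_mod f d" and "1 \<le> d" and "d = 1 \<or> coeff f 0 \<noteq> 0"
  shows "irreducible f"
proof (rule irreducibleI)
  show "f \<noteq> 0" using f by (auto simp: monomial_mod_def)
  show "\<not> f dvd 1" using unit_iff_monomial_mod_0[OF f] assms(2) by simp
  fix a b assume ab: "f = a * b"
  show "a dvd 1 \<or> b dvd 1"
  proof (rule ccontr)
    assume nu: "\<not> (a dvd 1 \<or> b dvd 1)"
    from f ab obtain x y where xy: "monomial_mod a x" "monomial_mod b y" "x + y = d"
      by (auto elim: monomial_mod_mult_factors)
    with nu unit_iff_monomial_mod_0 have "x \<noteq> 0" "y \<noteq> 0" by auto
    then have "d \<noteq> 1" "coeff a 0 \<in> M" "coeff b 0 \<in> M" using xy by (auto simp: monomial_mod_def)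
    then show False using assms(3) ab by (simp add: coeff_mult_0 mult_mem_eq_0)
  qed
qed

lemma irreducible_X: "irreducible ([:0,1:] :: 'a poly)"
  using monomial_mod_X_power[of 1] by (intro irreducible_monomial_modI) auto

lemma irreducible_monomial_mod_degree_pos:
  "irreducible f \<Longrightarrow> monomial_mod f d \<Longrightarrow> 1 \<le> d"
  using unit_iff_monomial_mod_0 by (auto simp: irreducible_def)

text \<open>Otherwise \<open>x\<close> would be a proper factor.\<close>

lemma irreducible_monomial_mod_coeff_0:
  assumes irr: "irreducible f" and f: "monomial_mod f d" and "2 \<le> d"
  shows "coeff f 0 \<noteq> 0"
proof
  assume "coeff f 0 = 0"
  then obtain q where fq: "f = pCons 0 q" by (cases f) simp
  then have "f = [:0,1:] * q" by simp
  moreover have "monomial_mod q (d - 1)"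
    using f \<open>2 \<le> d\<close> unfolding monomial_mod_def fq by (auto simp: coeff_pCons split: nat.splits)
  then have "\<not> q dvd 1" using unit_iff_monomial_mod_0 \<open>2 \<le> d\<close> by auto
  moreover have "\<not> ([:0,1:] :: 'a poly) dvd 1" using irreducible_X by (simp add: irreducible_def)
  ultimately show False using irr unfolding irreducible_def by metis
qed

lemma irreducible_binomial_mod:
  assumes "2 \<le> D" "0 < e" "e < D" "a \<in> M" "a \<noteq> 0" "b \<in> M"
  shows "irreducible ([:0,1:] ^ D + [:a:] + [:b:] * [:0,1:] ^ e)"
proof (rule irreducible_monomial_modI)
  show "monomial_mod ([:0,1:] ^ D + [:a:] + [:b:] * [:0,1:] ^ e) D"
    using assms by (auto simp: monomial_mod_def X_power_eq_monom coeff_monom coeff_pCons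
        one_not_mem split: nat.splits)
qed (use assms in \<open>auto simp: X_power_eq_monom coeff_monom\<close>)

section \<open>Vanishing sums of nonzero elements of the maximal ideal\<close>

definition vanishing_sum :: "nat \<Rightarrow> bool" where
  "vanishing_sum m \<longleftrightarrow> (\<exists>ws. length ws = m \<and> (\<forall>w\<in>set ws. w \<in> M \<and> w \<noteq> 0) \<and> sum_list ws = 0)"

lemma vanishing_sum_ge_2:
  assumes "vanishing_sum m" "0 < m"
  shows "2 \<le> m"
proof -
  obtain ws where ws: "length ws = m" "\<forall>w\<in>set ws. w \<in> M \<and> w \<noteq> 0" "sum_list ws = 0"
    using assms(1) by (auto simp: vanishing_sum_def)
  have "length ws \<noteq> 1" using ws(2,3) by (auto simp: length_Suc_conv)
  then show ?thesis using ws(1) assms(2) by linarith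
qed

lemma vanishing_sum_even:
  assumes "M = {0, a}" "a + a = 0" "vanishing_sum m"
  shows "even m"
proof -
  obtain ws where ws: "length ws = m" "\<forall>w\<in>set ws. w \<in> M \<and> w \<noteq> 0" "sum_list ws = 0"
    using assms(3) by (auto simp: vanishing_sum_def)
  then have "\<forall>w\<in>set ws. w = a" using assms(1) by auto
  then have rep: "ws = replicate m a" using ws(1) by (metis replicate_length_same)
  have sum_rep: "sum_list (replicate j a) = (if even j then 0 else a)" for j
    using assms(2) by (induct j) auto
  show ?thesis
  proof (rule ccontr)
    assume "odd m"
    then have "a \<in> set ws" using rep by (cases m) auto
    then show False using \<open>odd m\<close> ws rep sum_rep by auto
  qed
qed

text \<open>Multiplying by \<open>x\<^sup>D\<close> lets us read off the coefficient of \<open>x\<^bsup>(\<Sum>d\<^sub>i) - D\<^esup>\<close> in \<open>\<Prod>f\<^sub>i\<close> without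
  truncated subtraction. In a product with one more factor \<open>f\<close> of residue degree \<open>d \<le> D\<close>, only
  two terms survive: \<open>f\<close>'s unit coefficient times the old coefficient and, if \<open>d = D\<close>, \<open>f\<close>'s
  constant term times the unit top coefficient of the old product.\<close>

lemma coeff_shifted_mult:
  assumes f: "monomial_mod f d" "d \<le> D" and P: "monomial_mod P N" and "1 \<le> D"
  shows "coeff (f * (monom 1 D * P)) (d + N) =
    coeff f d * coeff (monom 1 D * P) N + (if d = D then coeff f 0 * coeff P N else 0)"
proof -
  define g where "g i = coeff f i * coeff (monom 1 D * P) (d + N - i)" for i
  define S where "S = {d} \<union> (if d = D then {0} else {})"
  have "coeff (f * (monom 1 D * P)) (d + N) = sum g {..d+N}" by (simp add: coeff_mult g_def)
  also have "\<dots> = sum g S"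
  proof (rule sum.mono_neutral_right)
    show "\<forall>i\<in>{..d + N} - S. g i = 0"
    proof
      fix i assume i: "i \<in> {..d + N} - S"
      then have "coeff f i \<in> M" using f by (auto simp: monomial_mod_def S_def)
      moreover have "d + N - i - D \<noteq> N" if "\<not> d + N - i < D"
        using i that f(2) by (auto simp: S_def split: if_splits)
      then have "d + N - i < D \<or> coeff P (d + N - i - D) \<in> M"
        using P by (auto simp: monomial_mod_def)
      ultimately show "g i = 0" by (auto simp: g_def coeff_monom_mult mult_mem_eq_0)
    qed
  qed (auto simp: S_def)
  also have "\<dots> = g d + (if d = D then g 0 else 0)" using \<open>1 \<le> D\<close> by (simp add: S_def)
  finally show ?thesis by (simp add: g_def coeff_monom_mult)
qed

lemma coeff_shifted_prod_list:
  assumes "list_all2 (\<lambda>f d. monomial_mod f d \<and> d \<le> D \<and> (d = D \<longrightarrow> coeff f 0 \<noteq> 0)) fs ds"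
    and "1 \<le> D"
  shows "\<exists>ws. length ws = length (filter ((=) D) ds) \<and> (\<forall>w\<in>set ws. w \<in> M \<and> w \<noteq> 0)
     \<and> coeff (monom 1 D * prod_list fs) (sum_list ds) = sum_list ws"
  using assms(1)
proof (induct fs arbitrary: ds)
  case Nil
  then show ?case using assms(2) by (auto simp: coeff_monom_mult)
next
  case (Cons f fs)
  then obtain d ds' where ds: "ds = d # ds'" and f: "monomial_mod f d" "d \<le> D"
      "d = D \<longrightarrow> coeff f 0 \<noteq> 0"
    and rest: "list_all2 (\<lambda>f d. monomial_mod f d \<and> d \<le> D \<and> (d = D \<longrightarrow> coeff f 0 \<noteq> 0)) fs ds'"
    by (cases ds) auto
  from Cons(1)[OF rest] obtain ws where ws: "length ws = length (filter ((=) D) ds')"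
    "\<forall>w\<in>set ws. w \<in> M \<and> w \<noteq> 0" "coeff (monom 1 D * prod_list fs) (sum_list ds') = sum_list ws"
    by blast
  have P: "monomial_mod (prod_list fs) (sum_list ds')"
    by (rule monomial_mod_prod_list) (use rest in \<open>auto elim: list_all2_mono\<close>)
  let ?u = "coeff f d" and ?c = "coeff f 0 * coeff (prod_list fs) (sum_list ds')"
  have u: "?u \<notin> M" using f by (simp add: monomial_mod_def)
  have uws: "\<forall>w\<in>set (map ((*) ?u) ws). w \<in> M \<and> w \<noteq> 0"
    using ws(2) u by (auto intro: mult_mem_right simp: not_mem_mult_ne_0)
  have "coeff (monom 1 D * prod_list (f # fs)) (sum_list ds) =
      ?u * sum_list ws + (if d = D then ?c else 0)"
    using coeff_shifted_mult[OF f(1,2) P assms(2)] ws(3) by (simp add: ds algebra_simps)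
  moreover have "?c \<in> M \<and> ?c \<noteq> 0" if "d = D"
    using f P that assms(2) not_mem_mult_ne_0[of "coeff (prod_list fs) (sum_list ds')" "coeff f 0"]
    by (auto simp: monomial_mod_def mult.commute intro: mult_mem_left)
  ultimately show ?case using ws(1) uws
    by (intro exI[of _ "(if d = D then [?c] else []) @ map ((*) ?u) ws"])
      (auto simp: ds sum_list_const_mult)
qed

lemma irreducible_factorization_X_power:
  fixes fs :: "'a poly list"
  assumes "\<forall>g\<in>set fs. irreducible g" "prod_list fs = [:0,1:] ^ n"
  obtains ds where "length ds = length fs" "\<forall>d\<in>set ds. 1 \<le> d" "sum_list ds = n"
    "\<And>D. 2 \<le> D \<Longrightarrow> \<forall>d\<in>set ds. d \<le> D \<Longrightarrow> vanishing_sum (length (filter ((=) D) ds))"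
proof -
  from monomial_mod_prod_list_factors[of fs n] assms(2) monomial_mod_X_power obtain ds
    where ds: "list_all2 monomial_mod fs ds" "sum_list ds = n" by auto
  have len: "length ds = length fs" using ds(1) by (simp add: list_all2_lengthD)
  have nth: "monomial_mod (fs ! i) (ds ! i)" "irreducible (fs ! i)" if "i < length fs" for i
    using ds(1) that assms(1) by (auto simp: list_all2_nthD)
  have pos: "\<forall>d\<in>set ds. 1 \<le> d"
    using nth irreducible_monomial_mod_degree_pos len by (metis in_set_conv_nth)
  have "vanishing_sum (length (filter ((=) D) ds))" if D: "2 \<le> D" "\<forall>d\<in>set ds. d \<le> D" for D
  proof -
    have "list_all2 (\<lambda>f d. monomial_mod f d \<and> d \<le> D \<and> (d = D \<longrightarrow> coeff f 0 \<noteq> 0)) fs ds"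
      using nth irreducible_monomial_mod_coeff_0 D len
      by (intro list_all2_all_nthI) (simp_all, metis nth_mem)
    from coeff_shifted_prod_list[OF this] D obtain ws where
      "length ws = length (filter ((=) D) ds)" "\<forall>w\<in>set ws. w \<in> M \<and> w \<noteq> 0"
      "coeff (monom 1 D * prod_list fs) (sum_list ds) = sum_list ws"
      by auto
    moreover have "coeff (monom 1 D * prod_list fs) (sum_list ds) = 0"
      using D by (simp add: assms(2) ds(2) coeff_monom_mult X_power_eq_monom coeff_monom) arith
    ultimately show ?thesis by (auto simp: vanishing_sum_def)
  qed
  with len pos ds(2) show ?thesis by (rule that)
qed

section \<open>Constructions of factorizations\<close>

lemma lengthsI:
  "length fs = k \<Longrightarrow> 0 < k \<Longrightarrow> \<forall>g\<in>set fs. irreducible g \<Longrightarrow> prod_list fs = f \<Longrightarrow> k \<in> lengths f"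
  by (auto simp: lengths_def)

lemma prod_list_replicate_X: "prod_list (replicate m ([:0,1:] :: 'a poly)) = [:0,1:] ^ m"
  by (simp add: prod_list_replicate)

lemma self_in_lengths_X_power: "1 \<le> n \<Longrightarrow> n \<in> lengths ([:0,1:] ^ n :: 'a poly)"
  by (rule lengthsI[of "replicate n [:0,1:]"]) (auto simp: prod_list_replicate_X irreducible_X)

lemma lengths_X_power_conjugate_pair:
  assumes "a \<in> M" "a \<noteq> 0" "2 \<le> D" "2 * D \<le> n"
  shows "n - 2 * D + 2 \<in> lengths ([:0,1:] ^ n :: 'a poly)"
proof -
  let ?X = "[:0,1:] :: 'a poly" and ?A = "[:a:] :: 'a poly"
  define fs where "fs = [?X ^ D + [:a:] + [:0:] * ?X ^ 1, ?X ^ D + [:-a:] + [:0:] * ?X ^ 1]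
    @ replicate (n - 2 * D) ?X"
  have AA: "?A * ?A = 0" using mult_mem_eq_0[OF assms(1) assms(1)] by simp
  have minus: "?X ^ D + [:-a:] + [:0:] * ?X ^ 1 = ?X ^ D - ?A" by simp
  have "prod_list fs = (?X ^ D + ?A) * (?X ^ D - ?A) * ?X ^ (n - 2 * D)"
    unfolding fs_def minus by (simp only: prod_list.append prod_list_replicate_X) simp
  also have "\<dots> = (?X ^ D * ?X ^ D - ?A * ?A) * ?X ^ (n - 2 * D)" by (simp add: algebra_simps)
  also have "\<dots> = ?X ^ (D + D + (n - 2 * D))" using AA by (simp add: power_add)
  also have "D + D + (n - 2 * D) = n" using assms by simp
  finally have "prod_list fs = ?X ^ n" .
  moreover have "\<forall>g\<in>set fs. irreducible g"
    using irreducible_binomial_mod[of D 1 a 0] irreducible_binomial_mod[of D 1 "-a" 0]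
      irreducible_X assms uminus_mem[of a]
    by (auto simp: fs_def)
  ultimately show ?thesis by (intro lengthsI[of fs]) (auto simp: fs_def)
qed

lemma prod_twisted_triple_eq:
  fixes Y X2 A :: "'b::comm_ring_1"
  shows "(Y * X2 + A - A * Y) * (Y * X2 - A) * (X2 + A) =
    Y * Y * X2 * X2 * X2 + (A * A) * (Y - 1 - Y * Y) * X2 + (A * A) * (Y - 1) * A"
  by (simp add: algebra_simps)

lemma lengths_X_power_twisted_triple:
  assumes "a \<in> M" "a \<noteq> 0" "3 \<le> D" "2 * D + 2 \<le> n"
  shows "n - 2 * D + 1 \<in> lengths ([:0,1:] ^ n :: 'a poly)"
proof -
  let ?X = "[:0,1:] :: 'a poly" and ?A = "[:a:] :: 'a poly"
  let ?Y = "?X ^ (D - 2)"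
  define fs where "fs = [?X ^ D + [:a:] + [:-a:] * ?X ^ (D - 2), ?X ^ D + [:-a:] + [:0:] * ?X ^ 1,
     ?X ^ 2 + [:a:] + [:0:] * ?X ^ 1] @ replicate (n - 2 * D - 2) ?X"
  have AA: "?A * ?A = 0" using mult_mem_eq_0[OF assms(1) assms(1)] by simp
  have "D = (D - 2) + 2" using assms(3) by simp
  then have XD: "?X ^ D = ?Y * ?X ^ 2" by (metis power_add)
  have minus: "?X ^ D + [:-a:] + [:0:] * ?X ^ 1 = ?X ^ D - ?A" by simp
  have twist: "?X ^ D + [:a:] + [:-a:] * ?X ^ (D - 2) = ?X ^ D + ?A - ?A * ?Y" by simp
  have "prod_list fs = (?Y * ?X ^ 2 + ?A - ?A * ?Y) * (?Y * ?X ^ 2 - ?A) * (?X ^ 2 + ?A)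
      * ?X ^ (n - 2 * D - 2)"
    unfolding fs_def twist minus unfolding XD by (simp only: prod_list.append prod_list_replicate_X) (simp add: mult.assoc)
  also have "\<dots> = ?Y * ?Y * ?X ^ 2 * ?X ^ 2 * ?X ^ 2 * ?X ^ (n - 2 * D - 2)"
    by (simp only: prod_twisted_triple_eq AA mult_zero_left add_0_right)
  also have "\<dots> = ?X ^ ((D - 2) + (D - 2) + 2 + 2 + 2 + (n - 2 * D - 2))" by (simp only: power_add)
  also have "(D - 2) + (D - 2) + 2 + 2 + 2 + (n - 2 * D - 2) = n" using assms by simp
  finally have "prod_list fs = ?X ^ n" .
  moreover have "\<forall>g\<in>set fs. irreducible g"
    using irreducible_binomial_mod[of D "D - 2" a "-a"] irreducible_binomial_mod[of D 1 "-a" 0]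
      irreducible_binomial_mod[of 2 1 a 0] irreducible_X assms uminus_mem[of a]
    by (auto simp: fs_def)
  ultimately show ?thesis by (intro lengthsI[of fs]) (use assms in \<open>auto simp: fs_def\<close>)
qed

lemma prod_quadratic_triple_eq:
  fixes X2 A B :: "'b::comm_ring_1"
  shows "(X2 + A) * (X2 + B) * (X2 - A - B) =
    X2 * X2 * X2 - (A * A + A * B + B * B) * X2 - (A * A) * B - A * (B * B)"
  by (simp add: algebra_simps)

lemma lengths_X_power_quadratic_triple:
  assumes "a \<in> M" "a \<noteq> 0" "b \<in> M" "b \<noteq> 0" "a + b \<noteq> 0" "6 \<le> n"
  shows "n - 3 \<in> lengths ([:0,1:] ^ n :: 'a poly)"
proof -
  let ?X = "[:0,1:] :: 'a poly" and ?A = "[:a:] :: 'a poly" and ?B = "[:b:] :: 'a poly"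
  define c where "c = - (a + b)"
  have c: "c \<in> M" "c \<noteq> 0" unfolding c_def using uminus_mem[OF add_mem[OF assms(1,3)]] assms(5) by auto
  define fs where "fs = [?X ^ 2 + [:a:] + [:0:] * ?X ^ 1, ?X ^ 2 + [:b:] + [:0:] * ?X ^ 1,
     ?X ^ 2 + [:c:] + [:0:] * ?X ^ 1] @ replicate (n - 6) ?X"
  have z: "?A * ?A = 0" "?A * ?B = 0" "?B * ?B = 0" using mult_mem_eq_0 assms by auto
  have minus: "?X ^ 2 + [:c:] + [:0:] * ?X ^ 1 = ?X ^ 2 - ?A - ?B" by (simp add: c_def)
  have "prod_list fs = (?X ^ 2 + ?A) * (?X ^ 2 + ?B) * (?X ^ 2 - ?A - ?B) * ?X ^ (n - 6)"
    unfolding fs_def minus by (simp only: prod_list.append prod_list_replicate_X) (simp add: mult.assoc)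
  also have "\<dots> = ?X ^ 2 * ?X ^ 2 * ?X ^ 2 * ?X ^ (n - 6)"
    by (simp only: prod_quadratic_triple_eq z mult_zero_left mult_zero_right add_0_right diff_0_right)
  also have "\<dots> = ?X ^ (2 + 2 + 2 + (n - 6))" by (simp only: power_add)
  also have "2 + 2 + 2 + (n - 6) = n" using assms by simp
  finally have "prod_list fs = ?X ^ n" .
  moreover have "\<forall>g\<in>set fs. irreducible g"
    using irreducible_binomial_mod[of 2 1 a 0] irreducible_binomial_mod[of 2 1 b 0]
      irreducible_binomial_mod[of 2 1 c 0] irreducible_X assms c
    by (auto simp: fs_def)
  ultimately show ?thesis by (intro lengthsI[of fs]) (use assms in \<open>auto simp: fs_def\<close>)
qed

end

lemma sum_list_eq_length_add_excess:
  "\<forall>d\<in>set ds. 1 \<le> (d::nat) \<Longrightarrow> sum_list ds = length ds + (\<Sum>d\<leftarrow>ds. d - 1)"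
  by (induct ds) auto

lemma count_mult_pred_le_excess:
  "length (filter ((=) D) ds) * (D - 1) \<le> (\<Sum>d::nat\<leftarrow>ds. d - 1)"
  by (induct ds) auto

lemma excess_eq_count_2:
  "\<forall>d\<in>set ds. 1 \<le> d \<and> d \<le> (2::nat) \<Longrightarrow> (\<Sum>d\<leftarrow>ds. d - 1) = length (filter ((=) 2) ds)"
  by (induct ds) auto

lemma excess_eq_0: "\<forall>d\<in>set ds. d < (2::nat) \<Longrightarrow> (\<Sum>d\<leftarrow>ds. d - 1) = 0"
  by (induct ds) auto

lemma length_bounds_of_repeated_max:
  fixes ds :: "nat list"
  assumes pos: "\<forall>d\<in>set ds. 1 \<le> d" and max: "D \<in> set ds" "\<forall>d\<in>set ds. d \<le> D"
    and repeated: "2 \<le> D \<Longrightarrow> 2 \<le> length (filter ((=) D) ds)"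
  shows "length ds = sum_list ds \<or>
    (2 \<le> length ds \<and> length ds + 2 \<le> sum_list ds \<and> (odd (sum_list ds) \<longrightarrow> 3 \<le> length ds))"
proof (cases "2 \<le> D")
  case False
  then have "\<forall>d\<in>set ds. d < 2" using max(2) by auto
  then show ?thesis using excess_eq_0 sum_list_eq_length_add_excess[OF pos] by simp
next
  case True
  let ?c = "length (filter ((=) D) ds)"
  have c: "2 \<le> ?c" using repeated True .
  have "2 * 1 \<le> ?c * (D - 1)" by (rule mult_le_mono) (use c True in simp_all)
  then have excess: "2 \<le> (\<Sum>d\<leftarrow>ds. d - 1)" using count_mult_pred_le_excess[of D ds] by linarith
  have len: "2 \<le> length ds" using c length_filter_le[of "(=) D" ds] by linarith
  have "even (sum_list ds)" if "length ds = 2"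
  proof -
    have "\<not> ?c < length ds" using c that by simp
    then have "\<forall>d\<in>set ds. d = D" using length_filter_less[of _ ds "(=) D"] by metis
    then have "ds = replicate 2 D" using that by (metis replicate_length_same)
    then show ?thesis by (simp add: sum_list_replicate)
  qed
  then show ?thesis using len excess sum_list_eq_length_add_excess[OF pos] by fastforce
qed

lemma length_ne_sum_minus_3_of_even_max:
  fixes ds :: "nat list"
  assumes pos: "\<forall>d\<in>set ds. 1 \<le> d" and max: "D \<in> set ds" "\<forall>d\<in>set ds. d \<le> D"
    and repeated: "2 \<le> D \<Longrightarrow> 2 \<le> length (filter ((=) D) ds)"
    and even: "2 \<le> D \<Longrightarrow> even (length (filter ((=) D) ds))"
  shows "length ds + 3 \<noteq> sum_list ds"
proof -
  consider "D < 2" | "D = 2" | "3 \<le> D" by arith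
  then have "(\<Sum>d\<leftarrow>ds. d - 1) \<noteq> 3"
  proof cases
    case 1
    then have "\<forall>d\<in>set ds. d < 2" using max(2) by auto
    then show ?thesis using excess_eq_0 by presburger
  next
    case 2
    then have "\<forall>d\<in>set ds. 1 \<le> d \<and> d \<le> 2" using pos max(2) by auto
    then have "(\<Sum>d\<leftarrow>ds. d - 1) = length (filter ((=) 2) ds)" by (rule excess_eq_count_2)
    moreover have "even (length (filter ((=) 2) ds))" using even 2 by simp
    ultimately show ?thesis by auto
  next
    case 3
    have "2 * 2 \<le> length (filter ((=) D) ds) * (D - 1)"
      by (rule mult_le_mono) (use 3 repeated in simp_all)
    then show ?thesis using count_mult_pred_le_excess[of D ds] by linarith
  qed
  then show ?thesis using sum_list_eq_length_add_excess[OF pos] by simp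
qed

section \<open>The set of lengths of \<open>x\<^sup>n\<close>\<close>

context sq_zero_local
begin

lemma lengths_X_power_degrees:
  assumes "k \<in> lengths ([:0,1:] ^ n :: 'a poly)"
  obtains ds D where "length ds = k" "\<forall>d\<in>set ds. 1 \<le> d" "sum_list ds = n"
    "D \<in> set ds" "\<forall>d\<in>set ds. d \<le> D" "2 \<le> D \<Longrightarrow> vanishing_sum (length (filter ((=) D) ds))"
proof -
  obtain fs :: "'a poly list" where fs: "length fs = k" "0 < k" "\<forall>g\<in>set fs. irreducible g"
    "prod_list fs = [:0,1:] ^ n"
    using assms unfolding lengths_def by blast
  obtain ds where ds: "length ds = length fs" "\<forall>d\<in>set ds. 1 \<le> d" "sum_list ds = n"
    "\<And>D. 2 \<le> D \<Longrightarrow> \<forall>d\<in>set ds. d \<le> D \<Longrightarrow> vanishing_sum (length (filter ((=) D) ds))"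
    using irreducible_factorization_X_power[OF fs(3,4)] by blast
  have "ds \<noteq> []" using ds(1) fs(1,2) by auto
  then have "Max (set ds) \<in> set ds" "\<forall>d\<in>set ds. d \<le> Max (set ds)" by simp_all
  with ds fs(1) show ?thesis by (intro that) auto
qed

lemma lengths_X_power_lower:
  assumes "k \<in> lengths ([:0,1:] ^ n :: 'a poly)"
  shows "k = n \<or> (2 \<le> k \<and> k + 2 \<le> n \<and> (odd n \<longrightarrow> 3 \<le> k))"
proof -
  obtain ds D where ds: "length ds = k" "\<forall>d\<in>set ds. 1 \<le> d" "sum_list ds = n"
    "D \<in> set ds" "\<forall>d\<in>set ds. d \<le> D" "2 \<le> D \<Longrightarrow> vanishing_sum (length (filter ((=) D) ds))"
    using lengths_X_power_degrees[OF assms] by blast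
  have "0 < length (filter ((=) D) ds)" using ds(4) by (intro length_pos_if_in_set[of D]) simp
  then have "2 \<le> D \<Longrightarrow> 2 \<le> length (filter ((=) D) ds)" using ds(6) vanishing_sum_ge_2 by blast
  from length_bounds_of_repeated_max[OF ds(2,4,5) this] show ?thesis unfolding ds(1,3) .
qed

lemma lengths_X_power_lower_two_elem:
  assumes "M = {0, a}" "a + a = 0" "k \<in> lengths ([:0,1:] ^ n :: 'a poly)"
  shows "k + 3 \<noteq> n"
proof -
  obtain ds D where ds: "length ds = k" "\<forall>d\<in>set ds. 1 \<le> d" "sum_list ds = n"
    "D \<in> set ds" "\<forall>d\<in>set ds. d \<le> D" "2 \<le> D \<Longrightarrow> vanishing_sum (length (filter ((=) D) ds))"
    using lengths_X_power_degrees[OF assms(3)] by blast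
  have "0 < length (filter ((=) D) ds)" using ds(4) by (intro length_pos_if_in_set[of D]) simp
  then have "2 \<le> D \<Longrightarrow> 2 \<le> length (filter ((=) D) ds)" using ds(6) vanishing_sum_ge_2 by blast
  moreover have "2 \<le> D \<Longrightarrow> even (length (filter ((=) D) ds))"
    using ds(6) vanishing_sum_even[OF assms(1,2)] by blast
  ultimately have "length ds + 3 \<noteq> sum_list ds" by (rule length_ne_sum_minus_3_of_even_max[OF ds(2,4,5)])
  then show ?thesis unfolding ds(1,3) .
qed

lemma lengths_X_power_upper:
  assumes "a \<in> M" "a \<noteq> 0" "7 \<le> n" "2 \<le> k" "k + 2 \<le> n" "odd n \<longrightarrow> 3 \<le> k"
    and "k + 3 = n \<Longrightarrow> \<exists>b\<in>M. b \<noteq> 0 \<and> a + b \<noteq> 0"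
  shows "k \<in> lengths ([:0,1:] ^ n :: 'a poly)"
proof -
  consider (even) i where "n - k = 2 * i" | (three) "n - k = 3" | (odd) i where "n - k = 2 * i + 1" "2 \<le> i"
  proof (cases "even (n - k)")
    case True
    then obtain i where "n - k = 2 * i" by (rule evenE)
    then show ?thesis by (rule that(1))
  next
    case False
    then obtain i where i: "n - k = 2 * i + 1" by (rule oddE)
    then show ?thesis using that(2,3) assms(5) by (cases "i = 1") auto
  qed
  then show ?thesis
  proof cases
    case even
    then have "n - 2 * (i + 1) + 2 = k" using assms(4,5) by auto
    moreover have "n - 2 * (i + 1) + 2 \<in> lengths ([:0,1:] ^ n :: 'a poly)"
      by (rule lengths_X_power_conjugate_pair) (use assms even in auto)
    ultimately show ?thesis by simp
  next
    case three
    then have "k + 3 = n" using assms(5) by simp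
    then obtain b where "b \<in> M" "b \<noteq> 0" "a + b \<noteq> 0" using assms(7) by blast
    then have "n - 3 \<in> lengths ([:0,1:] ^ n :: 'a poly)"
      using lengths_X_power_quadratic_triple[OF assms(1,2)] assms(3) by simp
    moreover have "n - 3 = k" using three assms(5) by simp
    ultimately show ?thesis by simp
  next
    case odd
    have "3 \<le> k"
    proof (rule ccontr)
      assume "\<not> 3 \<le> k"
      then have "k = 2" using assms(4) by simp
      with odd assms(5) have "n = 2 * (i + 1) + 1" by simp
      with \<open>k = 2\<close> assms(6) show False by simp
    qed
    then have "n - 2 * (i + 1) + 1 \<in> lengths ([:0,1:] ^ n :: 'a poly)"
      by (intro lengths_X_power_twisted_triple) (use assms odd in auto)
    moreover have "n - 2 * (i + 1) + 1 = k" using odd assms(4,5) by arith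
    ultimately show ?thesis by simp
  qed
qed

lemma lengths_X_power_eq:
  assumes "a \<in> M" "a \<noteq> 0" "b \<in> M" "b \<noteq> 0" "a + b \<noteq> 0" "7 \<le> n"
  shows "lengths ([:0,1:] ^ n :: 'a poly) = (if odd n then {3..n-2} \<union> {n} else {2..n-2} \<union> {n})"
proof -
  have "k \<in> lengths ([:0,1:] ^ n :: 'a poly) \<longleftrightarrow> k = n \<or> (2 \<le> k \<and> k + 2 \<le> n \<and> (odd n \<longrightarrow> 3 \<le> k))"
    for k
  proof (rule iffI[rotated])
    assume k: "k = n \<or> (2 \<le> k \<and> k + 2 \<le> n \<and> (odd n \<longrightarrow> 3 \<le> k))"
    show "k \<in> lengths ([:0,1:] ^ n :: 'a poly)"
    proof (cases "k = n")
      case True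
      then show ?thesis using self_in_lengths_X_power assms(6) by simp
    next
      case False
      with k have "2 \<le> k" "k + 2 \<le> n" "odd n \<longrightarrow> 3 \<le> k" by simp_all
      then show ?thesis by (rule lengths_X_power_upper[OF assms(1,2,6)]) (use assms(3-5) in blast)
    qed
  qed (rule lengths_X_power_lower)
  note iff = this
  show ?thesis
  proof (rule set_eqI)
    fix k show "k \<in> lengths ([:0,1:] ^ n :: 'a poly) \<longleftrightarrow>
        k \<in> (if odd n then {3..n-2} \<union> {n} else {2..n-2} \<union> {n})"
      unfolding iff using assms(6) by (cases "odd n") auto
  qed
qed

lemma lengths_X_power_eq_two_elem:
  assumes "M = {0, a}" "a \<noteq> 0" "a + a = 0" "7 \<le> n"
  shows "lengths ([:0,1:] ^ n :: 'a poly) =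
    (if odd n then {3..n-4} \<union> {n-2, n} else {2..n-4} \<union> {n-2, n})"
proof -
  have a: "a \<in> M" using assms(1) by simp
  have "k \<in> lengths ([:0,1:] ^ n :: 'a poly) \<longleftrightarrow>
      (k = n \<or> (2 \<le> k \<and> k + 2 \<le> n \<and> (odd n \<longrightarrow> 3 \<le> k))) \<and> k + 3 \<noteq> n" for k
  proof (rule iffI[rotated])
    assume k: "(k = n \<or> (2 \<le> k \<and> k + 2 \<le> n \<and> (odd n \<longrightarrow> 3 \<le> k))) \<and> k + 3 \<noteq> n"
    show "k \<in> lengths ([:0,1:] ^ n :: 'a poly)"
    proof (cases "k = n")
      case True
      then show ?thesis using self_in_lengths_X_power assms(4) by simp
    next
      case False
      with k have "2 \<le> k" "k + 2 \<le> n" "odd n \<longrightarrow> 3 \<le> k" "k + 3 \<noteq> n" by simp_all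
      then show ?thesis by (intro lengths_X_power_upper[OF a assms(2,4)]) simp_all
    qed
  qed (use lengths_X_power_lower lengths_X_power_lower_two_elem[OF assms(1,3)] in blast)
  note iff = this
  show ?thesis
  proof (rule set_eqI)
    fix k show "k \<in> lengths ([:0,1:] ^ n :: 'a poly) \<longleftrightarrow>
        k \<in> (if odd n then {3..n-4} \<union> {n-2, n} else {2..n-4} \<union> {n-2, n})"
      unfolding iff using assms(4) by (cases "odd n") auto
  qed
qed

section \<open>Residue rings of order 4\<close>

lemma UNIV_eq_two_cosets:
  assumes "a \<in> M" "a \<noteq> 0" "M = {0, a}"
  shows "UNIV = M \<union> (+) 1 ` M"
proof -
  have "r \<in> M \<union> (+) 1 ` M" for r
  proof (cases "r \<in> M")
    case False
    have "r * a \<in> M" by (rule mult_mem_right[OF assms(1)])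
    moreover have "r * a \<noteq> 0" using not_mem_mult_ne_0[OF False assms(2)] .
    ultimately have "r * a = a" using assms(3) by auto
    then have "(r - 1) * a = 0" by (simp add: algebra_simps)
    then have "r - 1 \<in> M" using not_mem_mult_ne_0[of "r - 1" a] assms(2) by auto
    moreover have "r = 1 + (r - 1)" by simp
    ultimately show ?thesis by blast
  qed simp
  then show ?thesis by blast
qed

lemma exists_mem_sum_ne_0:
  assumes "M \<noteq> {0}" "\<not> finite (UNIV :: 'a set) \<or> card (UNIV :: 'a set) > 4"
  shows "\<exists>a b. a \<in> M \<and> a \<noteq> 0 \<and> b \<in> M \<and> b \<noteq> 0 \<and> a + b \<noteq> 0"
proof (rule ccontr)
  assume H: "\<not> ?thesis"
  from assms(1) zero_mem obtain a where a: "a \<in> M" "a \<noteq> 0" by blast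
  have "M = {0, a}"
  proof
    show "M \<subseteq> {0, a}"
    proof
      fix b assume "b \<in> M"
      show "b \<in> {0, a}"
      proof (cases "b = 0")
        case False
        with H a \<open>b \<in> M\<close> have "a + b = 0" "a + a = 0" by blast+
        then show ?thesis by (metis add_left_cancel insertI2 singletonI)
      qed simp
    qed
  qed (use a in simp)
  with UNIV_eq_two_cosets[OF a] have U: "UNIV = M \<union> (+) 1 ` M" by simp
  have "finite (UNIV :: 'a set)" unfolding U using \<open>M = {0, a}\<close> by simp
  moreover have "card (UNIV :: 'a set) \<le> 4"
  proof -
    have "card (UNIV :: 'a set) \<le> card M + card ((+) 1 ` M)" unfolding U by (rule card_Un_le)
    also have "\<dots> \<le> card M + card M" using card_image_le[of M "(+) 1"] \<open>M = {0, a}\<close> by simp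
    also have "card M \<le> 2" using \<open>M = {0, a}\<close> by (simp add: card_insert_le_m1)
    finally show ?thesis by simp
  qed
  ultimately show False using assms(2) by simp
qed

text \<open>\<open>M\<close> and its coset \<open>1 + M\<close> are disjoint of the same size, so \<open>|M| \<le> 2\<close>.\<close>

lemma maximal_ideal_eq_two_elem:
  assumes "M \<noteq> {0}" "finite (UNIV :: 'a set)" "card (UNIV :: 'a set) = 4"
  obtains a where "M = {0, a}" "a \<noteq> 0" "a + a = 0"
proof -
  from assms(1) zero_mem obtain a where a: "a \<in> M" "a \<noteq> 0" by blast
  have fin: "finite M" using assms(2) by (rule finite_subset[rotated]) simp
  have disj: "M \<inter> (+) 1 ` M = {}"
  proof (rule ccontr)
    assume "M \<inter> (+) 1 ` M \<noteq> {}"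
    then obtain m where "m \<in> M" "1 + m \<in> M" by auto
    then have "(1 + m) - m \<in> M" by (rule diff_mem[rotated])
    then show False using one_not_mem by simp
  qed
  have inj: "inj_on ((+) 1) M" by (rule inj_onI) simp
  have "card (M \<union> (+) 1 ` M) = card M + card M"
    using card_Un_disjoint[OF fin finite_imageI[OF fin] disj] card_image[OF inj] by simp
  moreover have "card (M \<union> (+) 1 ` M) \<le> 4" using assms(2,3) by (metis card_mono subset_UNIV)
  ultimately have "card M \<le> 2" by simp
  moreover have "{0, a} \<subseteq> M" "card {0, a} = 2" using a by simp_all
  ultimately have M: "M = {0, a}" using fin by (metis card_seteq)
  have "a + a \<in> M" "a + a \<noteq> a" using add_mem[OF a(1) a(1)] a(2) by simp_all
  then have "a + a = 0" using M by auto
  with M a(2) show ?thesis by (rule that)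
qed

end

theorem theorem4p14:
  fixes M :: "'a::comm_ring_1 set" and n :: nat
  assumes "artinian_ring TYPE('a)"
    and "local_ring_with_max M"
    and "M \<noteq> {0}"
    and "\<forall>a\<in>M. \<forall>b\<in>M. a * b = 0"
    and "n \<ge> 7"
  shows "(\<not> finite (UNIV :: 'a set) \<or> card (UNIV :: 'a set) > 4 \<longrightarrow>
            lengths ([:0, 1:] ^ n :: 'a poly) =
              (if odd n then {3..n-2} \<union> {n} else {2..n-2} \<union> {n}))
       \<and> (finite (UNIV :: 'a set) \<and> card (UNIV :: 'a set) = 4 \<longrightarrow>
            lengths ([:0, 1:] ^ n :: 'a poly) =
              (if odd n then {3..n-4} \<union> {n-2, n} else {2..n-4} \<union> {n-2, n}))"
proof (intro conjI impI)
  interpret sq_zero_local M by (rule sq_zero_local_of_local_ring[OF assms(2,4)])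
  show "lengths ([:0, 1:] ^ n :: 'a poly) = (if odd n then {3..n-2} \<union> {n} else {2..n-2} \<union> {n})"
    if "\<not> finite (UNIV :: 'a set) \<or> card (UNIV :: 'a set) > 4"
    using exists_mem_sum_ne_0[OF assms(3) that] lengths_X_power_eq assms(5) by blast
  show "lengths ([:0, 1:] ^ n :: 'a poly) = (if odd n then {3..n-4} \<union> {n-2, n} else {2..n-4} \<union> {n-2, n})"
    if "finite (UNIV :: 'a set) \<and> card (UNIV :: 'a set) = 4"
    using maximal_ideal_eq_two_elem[OF assms(3)] that lengths_X_power_eq_two_elem assms(5) by metis
qed

end
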